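(* Let $n$ be even, let $1\le m\le n/2$, and let $F,F'\colon\mathbb F_2^n\to\mathbb F_2^m$ be two $(n,m)$-bent functions. Then $F$ and $F'$ are extended-affine equivalent if and only if their addition designs $\mathbb D(F)$ and $\mathbb D(F')$ are isomorphic.
   Context: An $(n,m)$-function is a map $F\colon\mathbb F_2^n\to\mathbb F_2^m$. For $\mathbf b\in\mathbb F_2^m$ the component function is $F_{\mathbf b}(\mathbf x)=\langle \mathbf b,F(\mathbf x)\rangle_m$ (standard dot product), and the Walsh transform is $W_F(\mathbf a,\mathbf b)=\sum_{\mathbf x\in\mathbb F_2^n}(-1)^{F_{\mathbf b}(\mathbf x)\oplus\langle\mathbf a,\mathbf x\rangle_n}$. $F$ is bent if $W_F(\mathbf a,\mathbf b)=\pm 2^{n/2}$ for all $\mathbf a\in\mathbb F_2^n$ and all $\mathbf b\in\mathbb F_2^m\setminus\{\mathbf 0\}$. Two $(n,m)$-functions $F,F'$ are extended-affine (EA-) equivalent if $F=A_1\circ F'\circ A_2\oplus A_3$ for a linear permutation $A_1$ of $\mathbb F_2^m$, an affine permutation $A_2$ of $\mathbb F_2^n$ and an affine map $A_3\colon\mathbb F_2^n\to\mathbb F_2^m$. For an $(n,m)$-bent $F$, let $\mathcal C(F)\subseteq\mathbb F_2^{2^n}$ be the binary linear code spanned by the rows of the $(n+m+1)\times 2^n$ matrix whose column indexed by $\mathbf x\in\mathbb F_2^n$ is $(1,\mathbf x,F(\mathbf x))^T$ (coordinates indexed by $\mathbb F_2^n$). The addition design $\mathbb D(F)$ is the incidence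 structure with point set $\mathbb F_2^n$ and block set $\{\operatorname{supp}(c): c\in\mathcal C(F),\ \operatorname{wt}(c)=2^{n-1}-2^{n/2-1}\}$. Two incidence structures are isomorphic if there exist permutation matrices $P,Q$ with $M=P M' Q$ for their incidence matrices $M,M'$ (equivalently, a bijection of points inducing a bijection of blocks). *)

theory Defs
  imports Main
begin

text \<open>Vectors of F_2^n are bool lists of length n (True = 1).\<close>

definition vecs :: "nat \<Rightarrow> bool list set" where
  "vecs n = {x. length x = n}"

definition vzero :: "nat \<Rightarrow> bool list" where
  "vzero n = replicate n False"

definition vadd :: "bool list \<Rightarrow> bool list \<Rightarrow> bool list" where
  "vadd x y = map2 (\<noteq>) x y"

definition dotp :: "bool list \<Rightarrow> bool list \<Rightarrow> bool" where
  "dotp a x = odd (card {i. i < length a \<and> a ! i \<and> x ! i})"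

definition is_nm_function :: "nat \<Rightarrow> nat \<Rightarrow> (bool list \<Rightarrow> bool list) \<Rightarrow> bool" where
  "is_nm_function n m F \<longleftrightarrow> (\<forall>x\<in>vecs n. F x \<in> vecs m)"

definition walsh :: "nat \<Rightarrow> (bool list \<Rightarrow> bool list) \<Rightarrow> bool list \<Rightarrow> bool list \<Rightarrow> int" where
  "walsh n F a b = (\<Sum>x\<in>vecs n. (-1) ^ (if dotp b (F x) \<noteq> dotp a x then 1 else 0))"

definition vbent :: "nat \<Rightarrow> nat \<Rightarrow> (bool list \<Rightarrow> bool list) \<Rightarrow> bool" where
  "vbent n m F \<longleftrightarrow> is_nm_function n m F \<and>
     (\<forall>a\<in>vecs n. \<forall>b\<in>vecs m - {vzero m}. \<bar>walsh n F a b\<bar> = 2 ^ (n div 2))"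

text \<open>Linear maps F_2^n \<rightarrow> F_2^m (additivity suffices over F_2).\<close>
definition linear_map :: "nat \<Rightarrow> nat \<Rightarrow> (bool list \<Rightarrow> bool list) \<Rightarrow> bool" where
  "linear_map n m L \<longleftrightarrow> (\<forall>x\<in>vecs n. L x \<in> vecs m) \<and>
     (\<forall>x\<in>vecs n. \<forall>y\<in>vecs n. L (vadd x y) = vadd (L x) (L y))"

definition affine_map :: "nat \<Rightarrow> nat \<Rightarrow> (bool list \<Rightarrow> bool list) \<Rightarrow> bool" where
  "affine_map n m A \<longleftrightarrow> (\<exists>L c. linear_map n m L \<and> c \<in> vecs m \<and>
     (\<forall>x\<in>vecs n. A x = vadd (L x) c))"

definition EA_equivalent :: "nat \<Rightarrow> nat \<Rightarrow> (bool list \<Rightarrow> bool list) \<Rightarrow> (bool list \<Rightarrow> bool list) \<Rightarrow> bool" where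
  "EA_equivalent n m F F' \<longleftrightarrow> (\<exists>A1 A2 A3.
     linear_map m m A1 \<and> bij_betw A1 (vecs m) (vecs m) \<and>
     affine_map n n A2 \<and> bij_betw A2 (vecs n) (vecs n) \<and>
     affine_map n m A3 \<and>
     (\<forall>x\<in>vecs n. F x = vadd (A1 (F' (A2 x))) (A3 x)))"

text \<open>The code C(F): the row space of the matrix with columns (1,x,F(x)).
  A linear combination of the rows with coefficients (c,a,b) is the word
  x \<mapsto> c + <a,x> + <b,F(x)>; codewords are represented as their support sets.\<close>
definition code_supports :: "nat \<Rightarrow> nat \<Rightarrow> (bool list \<Rightarrow> bool list) \<Rightarrow> bool list set set" where
  "code_supports n m F = {{x\<in>vecs n. c \<noteq> (dotp a x \<noteq> dotp b (F x))} | c a b.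
      a \<in> vecs n \<and> b \<in> vecs m}"

definition add_design_blocks :: "nat \<Rightarrow> nat \<Rightarrow> (bool list \<Rightarrow> bool list) \<Rightarrow> bool list set set" where
  "add_design_blocks n m F = {B\<in>code_supports n m F. card B = 2^(n-1) - 2^(n div 2 - 1)}"

definition incidence_iso :: "'a set \<Rightarrow> 'a set set \<Rightarrow> 'b set \<Rightarrow> 'b set set \<Rightarrow> bool" where
  "incidence_iso P B P' B' \<longleftrightarrow> (\<exists>\<sigma>. bij_betw \<sigma> P P' \<and> bij_betw (\<lambda>X. \<sigma> ` X) B B')"

end

theory Submission
  imports Defs
begin

text \<open>
  The blocks of the addition design are the supports of the codewords
  x \<mapsto> c + <a,x> + <b,F x> of weight 2^(n-1) - 2^(n/2-1); since |W_F(a,b)| = 2^(n/2), every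
  codeword with b \<noteq> 0 has weight 2^(n-1) \<plusminus> 2^(n/2-1). An EA-equivalence
  F = A1 \<circ> F' \<circ> A2 + A3 lets the affine permutation A2 carry the code of F onto that of F',
  hence blocks onto blocks.

  Conversely, the symmetric difference of two blocks with the same b is a hyperplane or the
  complement of one, while a symmetric difference of two codewords that has weight 2^(n-1)
  must come from b = 0 and so is a hyperplane. Hence a design isomorphism \<sigma> maps hyperplanes
  to hyperplanes, which makes every component of \<sigma> affine. Comparing a block with its image
  shows that each component b\<cdot>F differs from (\<phi> b)\<cdot>(F' \<circ> \<sigma>) by an affine function. As no
  component of a bent function is affine, \<phi> b is unique, so \<phi> is a linear bijection; its
  transpose A1 and A3 = F + A1 \<circ> F' \<circ> \<sigma> give the EA-equivalence.
\<close>

section \<open>The space F_2^n\<close>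

lemma mem_vecs [simp]: "x \<in> vecs n \<longleftrightarrow> length x = n"
  by (simp add: vecs_def)

lemma vecs_eq_lists: "vecs n = {xs. set xs \<subseteq> (UNIV :: bool set) \<and> length xs = n}"
  by auto

lemma finite_vecs: "finite (vecs n)"
  unfolding vecs_eq_lists by (rule finite_lists_length_eq) simp

lemma card_vecs: "card (vecs n) = 2 ^ n"
  using card_lists_length_eq[of "UNIV :: bool set" n] by (simp only: vecs_eq_lists) simp

lemma length_vadd [simp]: "length (vadd x y) = min (length x) (length y)"
  by (simp add: vadd_def)

lemma vadd_Cons [simp]: "vadd (a # as) (b # bs) = (a \<noteq> b) # vadd as bs"
  by (simp add: vadd_def)

lemma nth_vadd [simp]: "i < length x \<Longrightarrow> i < length y \<Longrightarrow> vadd x y ! i = (x ! i \<noteq> y ! i)"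
  by (simp add: vadd_def)

lemma length_vzero [simp]: "length (vzero n) = n"
  by (simp add: vzero_def)

lemma nth_vzero [simp]: "i < n \<Longrightarrow> vzero n ! i = False"
  by (simp add: vzero_def)

lemma vzero_0 [simp]: "vzero 0 = []"
  by (simp add: vzero_def)

lemma vzero_Suc: "vzero (Suc n) = False # vzero n"
  by (simp add: vzero_def)

lemma vzero_vadd [simp]: "length x = n \<Longrightarrow> vadd (vzero n) x = x"
  by (rule nth_equalityI) auto

lemma vadd_self [simp]: "vadd x x = vzero (length x)"
  by (rule nth_equalityI) auto

lemma vadd_vadd_cancel [simp]: "length x = length y \<Longrightarrow> vadd (vadd x y) y = x"
  by (rule nth_equalityI) auto

lemma vadd_eq_vzero_imp_eq: "length x = length y \<Longrightarrow> vadd x y = vzero (length x) \<Longrightarrow> x = y"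
  by (induction x y rule: list_induct2) (auto simp: vzero_Suc)

lemma dotp_Nil [simp]: "dotp [] x = False"
  by (simp add: dotp_def)

lemma dotp_Cons [simp]: "dotp (a # as) (y # ys) = ((a \<and> y) \<noteq> dotp as ys)"
proof -
  let ?S = "{i. i < length as \<and> as ! i \<and> ys ! i}"
  let ?T = "{i. i < length (a # as) \<and> (a # as) ! i \<and> (y # ys) ! i}"
  have "?T = (if a \<and> y then {0} else {}) \<union> Suc ` ?S"
  proof (rule set_eqI)
    fix i show "i \<in> ?T \<longleftrightarrow> i \<in> (if a \<and> y then {0} else {}) \<union> Suc ` ?S"
      by (cases i) auto
  qed
  moreover have "card (Suc ` ?S) = card ?S" by (simp add: card_image)
  moreover have "0 \<notin> Suc ` ?S" by auto
  ultimately show ?thesis unfolding dotp_def by (auto simp: card_insert_if)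
qed

lemma dotp_vzero_left [simp]: "dotp (vzero n) x = False"
proof -
  have "{i. i < n \<and> vzero n ! i \<and> x ! i} = {}" by auto
  thus ?thesis unfolding dotp_def length_vzero by (simp only: card.empty) simp
qed

lemma dotp_vzero_right [simp]: "length a = n \<Longrightarrow> dotp a (vzero n) = False"
  by (induction a arbitrary: n) (auto simp: vzero_Suc)

lemma dotp_vadd_left:
  "length a = length a' \<Longrightarrow> length a' = length x \<Longrightarrow> dotp (vadd a a') x = (dotp a x \<noteq> dotp a' x)"
  by (induction a a' x rule: list_induct3) auto

lemma dotp_vadd_right:
  "length a = length x \<Longrightarrow> length x = length y \<Longrightarrow> dotp a (vadd x y) = (dotp a x \<noteq> dotp a y)"
  by (induction a x y rule: list_induct3) auto

lemma dotp_commute: "length a = length x \<Longrightarrow> dotp a x = dotp x a"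
  by (induction a x rule: list_induct2) auto

definition unit_vec :: "nat \<Rightarrow> nat \<Rightarrow> bool list" where
  "unit_vec n i = (vzero n)[i := True]"

lemma length_unit_vec [simp]: "length (unit_vec n i) = n"
  by (simp add: unit_vec_def)

lemma unit_vec_neq_vzero:
  assumes "i < n" shows "unit_vec n i \<noteq> vzero n"
proof
  assume "unit_vec n i = vzero n"
  hence "unit_vec n i ! i = vzero n ! i" by simp
  thus False using assms by (simp add: unit_vec_def)
qed

lemma dotp_unit_vec: "i < n \<Longrightarrow> dotp (unit_vec n i) x = x ! i"
proof -
  assume i: "i < n"
  have "{j. j < length (unit_vec n i) \<and> unit_vec n i ! j \<and> x ! j} = (if x ! i then {i} else {})"
    using i by (auto simp: unit_vec_def nth_list_update)
  thus ?thesis by (simp add: dotp_def)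
qed

lemma vec_eqI:
  assumes "length u = n" "length v = n" and "\<And>b. length b = n \<Longrightarrow> dotp b u = dotp b v"
  shows "u = v"
proof (rule nth_equalityI)
  show "length u = length v" using assms by simp
  fix i assume "i < length u"
  hence "i < n" using assms(1) by simp
  thus "u ! i = v ! i" using assms(3)[of "unit_vec n i"] by (simp add: dotp_unit_vec)
qed

lemma additive_functional_eq_dotp:
  assumes "\<And>x y. length x = n \<Longrightarrow> length y = n \<Longrightarrow> l (vadd x y) = (l x \<noteq> l y)"
  shows "\<exists>\<alpha>. length \<alpha> = n \<and> (\<forall>x. length x = n \<longrightarrow> l x = dotp \<alpha> x)"
  using assms
proof (induction n arbitrary: l)
  case 0
  have "l [] = False" using "0"[of "[]" "[]"] by simp
  thus ?case by (intro exI[of _ "[]"]) auto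
next
  case (Suc n)
  have l0: "l (vzero (Suc n)) = False" using Suc.prems[of "vzero (Suc n)" "vzero (Suc n)"] by simp
  have "\<exists>\<alpha>. length \<alpha> = n \<and> (\<forall>x. length x = n \<longrightarrow> l (False # x) = dotp \<alpha> x)"
  proof (rule Suc.IH)
    fix x y :: "bool list" assume "length x = n" "length y = n"
    thus "l (False # vadd x y) = (l (False # x) \<noteq> l (False # y))"
      using Suc.prems[of "False # x" "False # y"] by simp
  qed
  then obtain \<alpha> where \<alpha>: "length \<alpha> = n" "\<And>x. length x = n \<Longrightarrow> l (False # x) = dotp \<alpha> x" by blast
  show ?case
  proof (intro exI[of _ "l (True # vzero n) # \<alpha>"] conjI allI impI)
    show "length (l (True # vzero n) # \<alpha>) = Suc n" using \<alpha> by simp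
    fix x :: "bool list" assume "length x = Suc n"
    then obtain h t where ht: "x = h # t" "length t = n" by (cases x) auto
    have "l x = (l (h # vzero n) \<noteq> l (False # t))"
      using Suc.prems[of "h # vzero n" "False # t"] ht by simp
    moreover have "l (h # vzero n) = (h \<and> l (True # vzero n))"
      using l0 by (cases h) (auto simp: vzero_Suc)
    ultimately show "l x = dotp (l (True # vzero n) # \<alpha>) x" using ht \<alpha> by auto
  qed
qed

definition hyperplanes :: "nat \<Rightarrow> bool list set set" where
  "hyperplanes n = {{x \<in> vecs n. dotp d x = e} | d e. length d = n \<and> d \<noteq> vzero n}"

lemma hyperplane_subset_vecs: "H \<in> hyperplanes n \<Longrightarrow> H \<subseteq> vecs n"
  unfolding hyperplanes_def by auto

lemma vecs_diff_hyperplane: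
  assumes "H \<in> hyperplanes n" shows "vecs n - H \<in> hyperplanes n"
proof -
  obtain d e where "length d = n" "d \<noteq> vzero n" and H: "H = {x \<in> vecs n. dotp d x = e}"
    using assms unfolding hyperplanes_def by blast
  moreover have "vecs n - H = {x \<in> vecs n. dotp d x = (\<not> e)}" unfolding H by auto
  ultimately show ?thesis unfolding hyperplanes_def by blast
qed

lemma card_hyperplane:
  assumes "H \<in> hyperplanes n" shows "card H = 2 ^ (n - 1)"
proof -
  obtain d e where d: "length d = n" "d \<noteq> vzero n" and H: "H = {x \<in> vecs n. dotp d x = e}"
    using assms unfolding hyperplanes_def by blast
  have "\<exists>i<n. d ! i"
  proof (rule ccontr)
    assume "\<not> (\<exists>i<n. d ! i)"
    hence "d = vzero n" using d(1) by (intro nth_equalityI) auto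
    with d(2) show False ..
  qed
  then obtain i where i: "i < n" "d ! i" by blast
  have flip: "dotp d (vadd x (unit_vec n i)) = (\<not> dotp d x)" if "length x = n" for x
    using that d i by (simp add: dotp_vadd_right dotp_commute[of d "unit_vec n i"] dotp_unit_vec)
  let ?T = "{x \<in> vecs n. dotp d x}" and ?U = "{x \<in> vecs n. \<not> dotp d x}"
  have "bij_betw (\<lambda>x. vadd x (unit_vec n i)) ?T ?U"
    by (rule bij_betw_byWitness[of _ "\<lambda>x. vadd x (unit_vec n i)"])
      (use flip in \<open>auto simp del: mem_vecs simp: vecs_def\<close>)
  hence "card ?T = card ?U" by (rule bij_betw_same_card)
  moreover have "card ?T + card ?U = 2 ^ n"
  proof -
    have "?T \<union> ?U = vecs n" "?T \<inter> ?U = {}" by auto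
    moreover have "finite ?T" "finite ?U" by (rule finite_subset[OF _ finite_vecs], blast)+
    ultimately show ?thesis using card_Un_disjoint[of ?T ?U] by (simp add: card_vecs)
  qed
  moreover have "(2::nat) ^ n = 2 * 2 ^ (n - 1)" using i by (cases n) auto
  ultimately have "card ?T = 2 ^ (n - 1)" "card ?U = 2 ^ (n - 1)" by linarith+
  moreover have "H = (if e then ?T else ?U)" unfolding H by auto
  ultimately show ?thesis by (cases e) (simp_all only: if_True if_False)
qed

section \<open>Affine Boolean functions and affine maps\<close>

definition affine_fn :: "nat \<Rightarrow> (bool list \<Rightarrow> bool) \<Rightarrow> bool" where
  "affine_fn n g \<longleftrightarrow> (\<exists>\<alpha> \<gamma>. length \<alpha> = n \<and> (\<forall>x. length x = n \<longrightarrow> g x = (dotp \<alpha> x \<noteq> \<gamma>)))"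

lemma affine_fn_additive:
  assumes "affine_fn n g" "length x = n" "length y = n"
  shows "g (vadd x y) = (g x \<noteq> (g y \<noteq> g (vzero n)))"
  using assms unfolding affine_fn_def by (auto simp: dotp_vadd_right)

lemma affine_fnI_additive:
  assumes "\<And>x y. length x = n \<Longrightarrow> length y = n \<Longrightarrow> g (vadd x y) = (g x \<noteq> (g y \<noteq> g (vzero n)))"
  shows "affine_fn n g"
proof -
  have "\<exists>\<alpha>. length \<alpha> = n \<and> (\<forall>x. length x = n \<longrightarrow> (g x \<noteq> g (vzero n)) = dotp \<alpha> x)"
    by (rule additive_functional_eq_dotp) (use assms in auto)
  then obtain \<alpha> where "length \<alpha> = n" "\<And>x. length x = n \<Longrightarrow> (g x \<noteq> g (vzero n)) = dotp \<alpha> x"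
    by blast
  thus ?thesis unfolding affine_fn_def by (intro exI[of _ \<alpha>] exI[of _ "g (vzero n)"]) auto
qed

lemma affine_fn_const: "affine_fn n (\<lambda>x. c)"
  unfolding affine_fn_def by (intro exI[of _ "vzero n"] exI[of _ c]) auto

lemma affine_fn_dotp: "length a = n \<Longrightarrow> affine_fn n (\<lambda>x. dotp a x)"
  unfolding affine_fn_def by (intro exI[of _ a] exI[of _ False]) auto

lemma affine_fn_xor: "affine_fn n g \<Longrightarrow> affine_fn n h \<Longrightarrow> affine_fn n (\<lambda>x. g x \<noteq> h x)"
  by (rule affine_fnI_additive) (auto simp: affine_fn_additive)

lemma affine_fn_cong: "affine_fn n g \<Longrightarrow> (\<And>x. length x = n \<Longrightarrow> g x = h x) \<Longrightarrow> affine_fn n h"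
  unfolding affine_fn_def by metis

lemma linear_map_vzero:
  assumes "linear_map n m L" shows "L (vzero n) = vzero m"
proof -
  have vzero_in: "vzero n \<in> vecs n" by simp
  have "L (vzero n) = L (vadd (vzero n) (vzero n))" by simp
  also have "\<dots> = vadd (L (vzero n)) (L (vzero n))"
    using assms vzero_in unfolding linear_map_def by blast
  also have "\<dots> = vzero m" using assms unfolding linear_map_def by simp
  finally show ?thesis .
qed

lemma affine_map_length: "affine_map n m A \<Longrightarrow> length x = n \<Longrightarrow> length (A x) = m"
  unfolding affine_map_def linear_map_def by auto

lemma affine_map_additive:
  assumes "affine_map n m A" "length x = n" "length y = n"
  shows "A (vadd x y) = vadd (vadd (A x) (A y)) (A (vzero n))"
proof -
  obtain L c where L: "linear_map n m L" "length c = m" "\<And>x. length x = n \<Longrightarrow> A x = vadd (L x) c"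
    using assms(1) unfolding affine_map_def by auto
  have "length (L x) = m" "length (L y) = m" "L (vadd x y) = vadd (L x) (L y)"
    using L(1) assms(2,3) unfolding linear_map_def by auto
  thus ?thesis using assms(2,3) L(2) linear_map_vzero[OF L(1)]
    by (simp add: L(3)) (rule nth_equalityI; auto)
qed

lemma affine_mapI_additive:
  assumes len: "\<And>x. length x = n \<Longrightarrow> length (A x) = m"
    and add: "\<And>x y. length x = n \<Longrightarrow> length y = n \<Longrightarrow>
      A (vadd x y) = vadd (vadd (A x) (A y)) (A (vzero n))"
  shows "affine_map n m A"
proof -
  define L where "L x = vadd (A x) (A (vzero n))" for x
  have len0: "length (A (vzero n)) = m" by (rule len) simp
  have "L (vadd x y) = vadd (L x) (L y)" if xy: "length x = n" "length y = n" for x y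
  proof -
    have "length (A x) = m" "length (A y) = m" using len[OF xy(1)] len[OF xy(2)] .
    thus ?thesis unfolding L_def add[OF xy] by (intro nth_equalityI) (use len0 in auto)
  qed
  moreover have "length (L x) = m" if "length x = n" for x
    unfolding L_def using len[OF that] len0 by simp
  ultimately have "linear_map n m L" unfolding linear_map_def by simp
  moreover have "\<forall>x\<in>vecs n. A x = vadd (L x) (A (vzero n))"
    by (auto simp: L_def len len0)
  moreover have "A (vzero n) \<in> vecs m" using len0 by simp
  ultimately show ?thesis unfolding affine_map_def by blast
qed

lemma affine_fn_comp:
  assumes g: "affine_fn m g" and s: "affine_map n m s"
  shows "affine_fn n (\<lambda>x. g (s x))"
proof (rule affine_fnI_additive)
  fix x y :: "bool list" assume xy: "length x = n" "length y = n"
  note l = affine_map_length[OF s]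
  have "g (s (vadd x y)) = g (vadd (vadd (s x) (s y)) (s (vzero n)))"
    by (simp add: affine_map_additive[OF s xy])
  also have "\<dots> = (g (vadd (s x) (s y)) \<noteq> (g (s (vzero n)) \<noteq> g (vzero m)))"
    using xy by (simp add: affine_fn_additive[OF g] l)
  also have "\<dots> = (g (s x) \<noteq> (g (s y) \<noteq> g (s (vzero n))))"
    using xy by (auto simp: affine_fn_additive[OF g] l)
  finally show "g (s (vadd x y)) = (g (s x) \<noteq> (g (s y) \<noteq> g (s (vzero n))))" .
qed

lemma affine_mapI_components:
  assumes len: "\<And>x. length x = n \<Longrightarrow> length (A x) = m"
    and comp: "\<And>b. length b = m \<Longrightarrow> affine_fn n (\<lambda>x. dotp b (A x))"
  shows "affine_map n m A"
proof (rule affine_mapI_additive[OF len])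
  fix x y :: "bool list" assume xy: "length x = n" "length y = n"
  show "A (vadd x y) = vadd (vadd (A x) (A y)) (A (vzero n))"
  proof (rule vec_eqI[of _ m])
    fix b :: "bool list" assume b: "length b = m"
    show "dotp b (A (vadd x y)) = dotp b (vadd (vadd (A x) (A y)) (A (vzero n)))"
      using affine_fn_additive[OF comp[OF b] xy] b xy by (simp add: len dotp_vadd_right) argo
  qed (use len xy in auto)
qed

lemma affine_map_inv:
  assumes s: "affine_map n n s" and bij: "bij_betw s (vecs n) (vecs n)"
  shows "affine_map n n (inv_into (vecs n) s)"
proof (rule affine_mapI_additive)
  let ?t = "inv_into (vecs n) s"
  show tl: "length (?t u) = n" if "length u = n" for u
    using bij_betwE[OF bij_betw_inv_into[OF bij]] that by simp
  have st: "s (?t u) = u" if "length u = n" for u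
    using bij f_inv_into_f[of u s "vecs n"] that unfolding bij_betw_def by auto
  have ts: "?t (s x) = x" if "length x = n" for x
    using bij inv_into_f_f[of s "vecs n" x] that unfolding bij_betw_def by auto
  note sl = affine_map_length[OF s] and sadd = affine_map_additive[OF s]
  fix u v :: "bool list" assume uv: "length u = n" "length v = n"
  define x y z where "x = ?t u" and "y = ?t v" and "z = ?t (vzero n)"
  have l: "length x = n" "length y = n" "length z = n"
    unfolding x_def y_def z_def using tl uv by auto
  have "s (vadd (vadd x y) z) = vadd (vadd (s (vadd x y)) (s z)) (s (vzero n))"
    using sadd l by simp
  also have "\<dots> = vadd (vadd (vadd (vadd u v) (s (vzero n))) (vzero n)) (s (vzero n))"
    using sadd l st uv unfolding x_def y_def z_def by simp
  also have "\<dots> = vadd u v" using uv sl[of "vzero n"] by (auto intro!: nth_equalityI)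
  finally show "?t (vadd u v) = vadd (vadd (?t u) (?t v)) (?t (vzero n))"
    using ts[of "vadd (vadd x y) z"] l unfolding x_def y_def z_def by simp
qed

lemma linear_map_transpose:
  assumes L: "linear_map m m L" "bij_betw L (vecs m) (vecs m)"
  obtains T where "linear_map m m T" "bij_betw T (vecs m) (vecs m)"
    "\<And>b y. length b = m \<Longrightarrow> length y = m \<Longrightarrow> dotp b (L y) = dotp (T b) y"
proof -
  have Ll: "length (L y) = m" if "length y = m" for y
    using L(1) that unfolding linear_map_def by simp
  have "\<forall>b\<in>vecs m. \<exists>\<beta>. length \<beta> = m \<and> (\<forall>y. length y = m \<longrightarrow> dotp b (L y) = dotp \<beta> y)"
  proof
    fix b :: "bool list" assume "b \<in> vecs m"
    thus "\<exists>\<beta>. length \<beta> = m \<and> (\<forall>y. length y = m \<longrightarrow> dotp b (L y) = dotp \<beta> y)"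
      using L(1) Ll unfolding linear_map_def
      by (intro additive_functional_eq_dotp) (simp add: dotp_vadd_right)
  qed
  then obtain T where
    "\<forall>b\<in>vecs m. length (T b) = m \<and> (\<forall>y. length y = m \<longrightarrow> dotp b (L y) = dotp (T b) y)"
    by (rule bchoice[THEN exE])
  hence T: "\<And>b. length b = m \<Longrightarrow> length (T b) = m"
    "\<And>b y. length b = m \<Longrightarrow> length y = m \<Longrightarrow> dotp b (L y) = dotp (T b) y"
    by auto
  have dotp_T: "dotp y (T b) = dotp (L y) b" if "length b = m" "length y = m" for b y
    using T that by (simp add: dotp_commute Ll)
  have "T (vadd b1 b2) = vadd (T b1) (T b2)" if "length b1 = m" "length b2 = m" for b1 b2
    by (rule vec_eqI[of _ m])
      (use that T in \<open>simp_all add: dotp_T dotp_vadd_right dotp_vadd_left Ll\<close>)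
  hence lin: "linear_map m m T" unfolding linear_map_def using T(1) by simp
  have inj: "inj_on T (vecs m)"
  proof (rule inj_onI)
    fix b1 b2 assume b: "b1 \<in> vecs m" "b2 \<in> vecs m" "T b1 = T b2"
    show "b1 = b2"
    proof (rule vec_eqI[of _ m])
      fix z :: "bool list" assume "length z = m"
      then obtain y where "length y = m" "z = L y"
        using bij_betw_imp_surj_on[OF L(2)] by (metis imageE mem_vecs)
      thus "dotp z b1 = dotp z b2" using b dotp_T[of b1 y] dotp_T[of b2 y] by simp
    qed (use b in auto)
  qed
  have "T ` vecs m \<subseteq> vecs m" using T(1) by auto
  hence "bij_betw T (vecs m) (vecs m)"
    unfolding bij_betw_def using inj endo_inj_surj[OF finite_vecs _ inj] by blast
  from lin this T(2) show ?thesis by (rule that)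
qed

section \<open>Codewords of a bent function and their weights\<close>

definition codeword ::
    "nat \<Rightarrow> (bool list \<Rightarrow> bool list) \<Rightarrow> bool \<Rightarrow> bool list \<Rightarrow> bool list \<Rightarrow> bool list set" where
  "codeword n F c a b = {x \<in> vecs n. c \<noteq> (dotp a x \<noteq> dotp b (F x))}"

lemma code_supports_eq:
  "code_supports n m F = {codeword n F c a b | c a b. length a = n \<and> length b = m}"
  unfolding code_supports_def codeword_def by simp

lemma codeword_subset_vecs: "codeword n F c a b \<subseteq> vecs n"
  unfolding codeword_def by auto

lemma finite_codeword: "finite (codeword n F c a b)"
  using finite_subset[OF codeword_subset_vecs finite_vecs] .

lemma codeword_vzero_right: "codeword n F c a (vzero m) = {x \<in> vecs n. dotp a x = (\<not> c)}"
  unfolding codeword_def by auto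

lemma card_codeword_add_card_codeword_Not:
  "card (codeword n F c a b) + card (codeword n F (\<not> c) a b) = 2 ^ n"
proof -
  have "codeword n F c a b \<union> codeword n F (\<not> c) a b = vecs n"
    and disjoint: "codeword n F c a b \<inter> codeword n F (\<not> c) a b = {}"
    unfolding codeword_def by auto
  moreover have "card (codeword n F c a b \<union> codeword n F (\<not> c) a b)
      = card (codeword n F c a b) + card (codeword n F (\<not> c) a b)"
    by (rule card_Un_disjoint) (simp_all only: finite_codeword disjoint)
  ultimately show ?thesis by (simp add: card_vecs)
qed

lemma walsh_eq_card_codeword: "walsh n F a b = 2 ^ n - 2 * int (card (codeword n F False a b))"
proof -
  let ?S = "codeword n F False a b"
  have "walsh n F a b = (\<Sum>x\<in>vecs n. 1 - 2 * (if x \<in> ?S then 1 else 0))"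
    unfolding walsh_def codeword_def by (rule sum.cong) auto
  also have "\<dots> = int (card (vecs n)) - 2 * int (card (vecs n \<inter> ?S))"
    by (simp add: sum_subtractf sum_distrib_left[symmetric] sum.If_cases[OF finite_vecs])
  also have "vecs n \<inter> ?S = ?S" using codeword_subset_vecs by blast
  finally show ?thesis by (simp add: card_vecs)
qed

lemma power_half_lt_power_pred:
  assumes "2 \<le> n" shows "(2::nat) ^ (n div 2 - 1) < 2 ^ (n - 1)"
  using assms by (intro power_strict_increasing) auto

lemma bent_card_codeword:
  assumes bent: "vbent n m F" and n: "2 \<le> n"
    and ab: "length a = n" "length b = m" "b \<noteq> vzero m"
  shows "card (codeword n F c a b) = 2 ^ (n - 1) - 2 ^ (n div 2 - 1)
       \<or> card (codeword n F c a b) = 2 ^ (n - 1) + 2 ^ (n div 2 - 1)"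
proof -
  define P h :: nat where "P = 2 ^ (n - 1)" and "h = 2 ^ (n div 2 - 1)"
  have "h < P" unfolding P_def h_def using power_half_lt_power_pred[OF n] .
  have pow_n_nat: "(2::nat) ^ n = 2 * P" unfolding P_def using n by (cases n) auto
  hence pow_n: "(2::int) ^ n = 2 * int P" by (metis of_nat_mult of_nat_numeral of_nat_power)
  have pow_half: "(2::int) ^ (n div 2) = 2 * int h"
    unfolding h_def using n by (cases "n div 2") auto
  define s where "s = card (codeword n F False a b)"
  have "\<bar>walsh n F a b\<bar> = 2 ^ (n div 2)" using bent ab unfolding vbent_def by auto
  hence "\<bar>2 * int P - 2 * int s\<bar> = 2 * int h"
    unfolding walsh_eq_card_codeword pow_n pow_half s_def .
  hence s: "s = P - h \<or> s = P + h" using \<open>h < P\<close> by linarith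
  have "s + card (codeword n F True a b) = 2 * P"
    using card_codeword_add_card_codeword_Not[of n F False a b] pow_n_nat unfolding s_def by simp
  with s \<open>h < P\<close> show ?thesis unfolding P_def[symmetric] h_def[symmetric] s_def
    by (cases c) auto
qed

lemma design_block_exists:
  assumes bent: "vbent n m F" and n: "2 \<le> n"
    and ab: "length a = n" "length b = m" "b \<noteq> vzero m"
  shows "\<exists>c. codeword n F c a b \<in> add_design_blocks n m F"
proof -
  define P h :: nat where "P = 2 ^ (n - 1)" and "h = 2 ^ (n div 2 - 1)"
  have "h < P" unfolding P_def h_def using power_half_lt_power_pred[OF n] .
  have "card (codeword n F False a b) + card (codeword n F True a b) = 2 * P"
    using card_codeword_add_card_codeword_Not[of n F False a b] n unfolding P_def by (cases n) auto
  moreover have "card (codeword n F False a b) = P - h \<or> card (codeword n F False a b) = P + h"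
    using bent_card_codeword[OF assms] unfolding P_def h_def by blast
  ultimately have "card (codeword n F False a b) = P - h \<or> card (codeword n F True a b) = P - h"
    using \<open>h < P\<close> by linarith
  hence "\<exists>c. card (codeword n F c a b) = 2 ^ (n - 1) - 2 ^ (n div 2 - 1)"
    unfolding P_def h_def by blast
  thus ?thesis unfolding add_design_blocks_def code_supports_eq using ab by blast
qed

definition no_affine_component :: "nat \<Rightarrow> nat \<Rightarrow> (bool list \<Rightarrow> bool list) \<Rightarrow> bool" where
  "no_affine_component n m G \<longleftrightarrow>
     (\<forall>\<beta>. length \<beta> = m \<longrightarrow> \<beta> \<noteq> vzero m \<longrightarrow> \<not> affine_fn n (\<lambda>x. dotp \<beta> (G x)))"

lemma no_affine_componentD:
  assumes "no_affine_component n m G" "length \<beta> = m" "affine_fn n (\<lambda>x. dotp \<beta> (G x))"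
  shows "\<beta> = vzero m"
  using assms unfolding no_affine_component_def by blast

lemma vbent_no_affine_component:
  assumes bent: "vbent n m F" and n: "2 \<le> n"
  shows "no_affine_component n m F"
  unfolding no_affine_component_def
proof (intro allI impI notI)
  fix b :: "bool list" assume b: "length b = m" "b \<noteq> vzero m" and "affine_fn n (\<lambda>x. dotp b (F x))"
  then obtain \<alpha> \<gamma> where \<alpha>: "length \<alpha> = n" "\<And>x. length x = n \<Longrightarrow> dotp b (F x) = (dotp \<alpha> x \<noteq> \<gamma>)"
    unfolding affine_fn_def by blast
  have "walsh n F \<alpha> b = (\<Sum>x\<in>vecs n. (-1) ^ (if \<gamma> then 1 else 0))"
    unfolding walsh_def by (rule sum.cong) (auto simp: \<alpha>(2))
  hence "\<bar>walsh n F \<alpha> b\<bar> = 2 ^ n" by (simp add: card_vecs)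
  moreover have "\<bar>walsh n F \<alpha> b\<bar> = 2 ^ (n div 2)" using bent \<alpha>(1) b unfolding vbent_def by auto
  moreover have "(2::int) ^ (n div 2) < 2 ^ n" using n by (intro power_strict_increasing) auto
  ultimately show False by simp
qed

section \<open>EA-equivalent functions have isomorphic designs\<close>

lemma image_codeword:
  assumes bij: "bij_betw \<sigma> (vecs n) (vecs n)"
    and eq: "\<And>x. length x = n \<Longrightarrow>
      (c \<noteq> (dotp a x \<noteq> dotp b (F x))) = (c' \<noteq> (dotp a' (\<sigma> x) \<noteq> dotp b' (G (\<sigma> x))))"
  shows "\<sigma> ` codeword n F c a b = codeword n G c' a' b'"
proof -
  have mem: "\<sigma> x \<in> codeword n G c' a' b' \<longleftrightarrow> x \<in> codeword n F c a b" if "x \<in> vecs n" for x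
  proof -
    have "\<sigma> x \<in> vecs n" using bij_betwE[OF bij] that by blast
    with that eq[OF that[unfolded mem_vecs]] show ?thesis
      unfolding codeword_def mem_Collect_eq by argo
  qed
  show ?thesis
  proof
    show "\<sigma> ` codeword n F c a b \<subseteq> codeword n G c' a' b'"
    proof (rule image_subsetI)
      fix x assume "x \<in> codeword n F c a b"
      thus "\<sigma> x \<in> codeword n G c' a' b'" using mem codeword_subset_vecs[of n F c a b] by blast
    qed
    show "codeword n G c' a' b' \<subseteq> \<sigma> ` codeword n F c a b"
    proof
      fix y assume y: "y \<in> codeword n G c' a' b'"
      hence "y \<in> \<sigma> ` vecs n"
        using bij_betw_imp_surj_on[OF bij] codeword_subset_vecs[of n G c' a' b'] by blast
      then obtain x where "x \<in> vecs n" "y = \<sigma> x" by (rule imageE)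
      with y mem show "y \<in> \<sigma> ` codeword n F c a b" by blast
    qed
  qed
qed

lemma incidence_iso_of_image_code_supports:
  assumes bij: "bij_betw \<sigma> (vecs n) (vecs n)"
    and code: "(\<lambda>X. \<sigma> ` X) ` code_supports n m F = code_supports n m G"
  shows "incidence_iso (vecs n) (add_design_blocks n m F) (vecs n) (add_design_blocks n m G)"
proof -
  let ?K = "2 ^ (n - 1) - 2 ^ (n div 2 - 1) :: nat"
  have inj: "inj_on \<sigma> (vecs n)" using bij by (rule bij_betw_imp_inj_on)
  have sub: "X \<subseteq> vecs n" if "X \<in> code_supports n m F" for X
    using that unfolding code_supports_def by auto
  have card: "card (\<sigma> ` X) = card X" if "X \<in> code_supports n m F" for X
    using card_image[OF inj_on_subset[OF inj sub[OF that]]] .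
  have "inj_on (\<lambda>X. \<sigma> ` X) (code_supports n m F)"
  proof (rule inj_onI)
    fix X Y assume "X \<in> code_supports n m F" "Y \<in> code_supports n m F" "\<sigma> ` X = \<sigma> ` Y"
    thus "X = Y" using inj_on_image_eq_iff[OF inj sub sub] by blast
  qed
  hence "inj_on (\<lambda>X. \<sigma> ` X) (add_design_blocks n m F)"
    by (rule inj_on_subset) (simp add: add_design_blocks_def)
  moreover have "(\<lambda>X. \<sigma> ` X) ` add_design_blocks n m F = add_design_blocks n m G"
  proof (intro equalityI subsetI)
    fix Y assume "Y \<in> (\<lambda>X. \<sigma> ` X) ` add_design_blocks n m F"
    then obtain X where X: "X \<in> code_supports n m F" "card X = ?K" and Y: "Y = \<sigma> ` X"
      unfolding add_design_blocks_def by blast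
    have "Y \<in> code_supports n m G" unfolding Y code[symmetric] using X(1) by (rule imageI)
    thus "Y \<in> add_design_blocks n m G"
      unfolding add_design_blocks_def using X card Y by simp
  next
    fix Y assume "Y \<in> add_design_blocks n m G"
    hence Y: "Y \<in> (\<lambda>X. \<sigma> ` X) ` code_supports n m F" "card Y = ?K"
      unfolding add_design_blocks_def code by simp_all
    then obtain X where X: "X \<in> code_supports n m F" "Y = \<sigma> ` X" by blast
    hence "X \<in> add_design_blocks n m F"
      unfolding add_design_blocks_def using Y(2) card by simp
    thus "Y \<in> (\<lambda>X. \<sigma> ` X) ` add_design_blocks n m F" using X(2) by (rule rev_image_eqI)
  qed
  ultimately have "bij_betw (\<lambda>X. \<sigma> ` X) (add_design_blocks n m F) (add_design_blocks n m G)"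
    by (rule bij_betw_imageI)
  with bij show ?thesis unfolding incidence_iso_def by blast
qed

definition component_affine_equiv :: "nat \<Rightarrow> nat \<Rightarrow> (bool list \<Rightarrow> bool list) \<Rightarrow>
    (bool list \<Rightarrow> bool list) \<Rightarrow> bool list \<Rightarrow> bool list \<Rightarrow> bool" where
  "component_affine_equiv n m F G b \<beta> \<longleftrightarrow>
     length \<beta> = m \<and> affine_fn n (\<lambda>x. dotp b (F x) \<noteq> dotp \<beta> (G x))"

lemma image_codeword_of_affine_diff:
  assumes \<sigma>: "affine_map n n \<sigma>" "bij_betw \<sigma> (vecs n) (vecs n)" and a: "length a = n"
    and diff: "affine_fn n (\<lambda>x. dotp b (F x) \<noteq> dotp \<beta> (G (\<sigma> x)))"
  obtains c' a' where "length a' = n" "\<sigma> ` codeword n F c a b = codeword n G c' a' \<beta>"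
proof -
  let ?g = "\<lambda>x. c \<noteq> (dotp a x \<noteq> (dotp b (F x) \<noteq> dotp \<beta> (G (\<sigma> x))))"
  have "affine_fn n ?g" by (intro affine_fn_xor affine_fn_const affine_fn_dotp diff a)
  hence "affine_fn n (\<lambda>y. ?g (inv_into (vecs n) \<sigma> y))"
    using affine_fn_comp[OF _ affine_map_inv[OF \<sigma>]] by blast
  then obtain \<alpha> \<gamma> where \<alpha>: "length \<alpha> = n"
    "\<And>y. length y = n \<Longrightarrow> ?g (inv_into (vecs n) \<sigma> y) = (dotp \<alpha> y \<noteq> \<gamma>)"
    unfolding affine_fn_def by blast
  have "\<sigma> ` codeword n F c a b = codeword n G \<gamma> \<alpha> \<beta>"
  proof (rule image_codeword[OF \<sigma>(2)])
    fix x :: "bool list" assume x: "length x = n"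
    have "?g x = (dotp \<alpha> (\<sigma> x) \<noteq> \<gamma>)"
      using \<alpha>(2)[OF affine_map_length[OF \<sigma>(1) x]] bij_betw_imp_inj_on[OF \<sigma>(2)] x by simp
    thus "(c \<noteq> (dotp a x \<noteq> dotp b (F x))) = (\<gamma> \<noteq> (dotp \<alpha> (\<sigma> x) \<noteq> dotp \<beta> (G (\<sigma> x))))"
      by argo
  qed
  with \<alpha>(1) show ?thesis by (rule that)
qed

lemma codeword_eq_image_of_affine_diff:
  assumes \<sigma>: "affine_map n n \<sigma>" "bij_betw \<sigma> (vecs n) (vecs n)" and a': "length a' = n"
    and diff: "affine_fn n (\<lambda>x. dotp b (F x) \<noteq> dotp \<beta> (G (\<sigma> x)))"
  obtains c a where "length a = n" "\<sigma> ` codeword n F c a b = codeword n G c' a' \<beta>"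
proof -
  let ?g = "\<lambda>x. c' \<noteq> (dotp a' (\<sigma> x) \<noteq> (dotp b (F x) \<noteq> dotp \<beta> (G (\<sigma> x))))"
  have "affine_fn n ?g"
    by (intro affine_fn_xor affine_fn_const affine_fn_comp[OF affine_fn_dotp \<sigma>(1)] diff a')
  then obtain \<alpha> \<gamma> where \<alpha>: "length \<alpha> = n" "\<And>x. length x = n \<Longrightarrow> ?g x = (dotp \<alpha> x \<noteq> \<gamma>)"
    unfolding affine_fn_def by blast
  have "\<sigma> ` codeword n F \<gamma> \<alpha> b = codeword n G c' a' \<beta>"
  proof (rule image_codeword[OF \<sigma>(2)])
    fix x :: "bool list" assume x: "length x = n"
    show "(\<gamma> \<noteq> (dotp \<alpha> x \<noteq> dotp b (F x))) = (c' \<noteq> (dotp a' (\<sigma> x) \<noteq> dotp \<beta> (G (\<sigma> x))))"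
      using \<alpha>(2)[OF x] by argo
  qed
  with \<alpha>(1) show ?thesis by (rule that)
qed

lemma image_code_supports_of_component_affine_equiv:
  assumes \<sigma>: "affine_map n n \<sigma>" "bij_betw \<sigma> (vecs n) (vecs n)" and T: "bij_betw T (vecs m) (vecs m)"
    and eq: "\<And>b. length b = m \<Longrightarrow> component_affine_equiv n m F (\<lambda>x. F' (\<sigma> x)) b (T b)"
  shows "(\<lambda>X. \<sigma> ` X) ` code_supports n m F = code_supports n m F'"
proof -
  have diff: "affine_fn n (\<lambda>x. dotp b (F x) \<noteq> dotp (T b) (F' (\<sigma> x)))" if "length b = m" for b
    using eq[OF that] unfolding component_affine_equiv_def by simp
  show ?thesis
  proof (intro equalityI subsetI)
    fix Y assume "Y \<in> (\<lambda>X. \<sigma> ` X) ` code_supports n m F"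
    then obtain c a b where Y: "Y = \<sigma> ` codeword n F c a b" and ab: "length a = n" "length b = m"
      unfolding code_supports_eq by blast
    obtain c' a' where "length a' = n" "\<sigma> ` codeword n F c a b = codeword n F' c' a' (T b)"
      by (rule image_codeword_of_affine_diff[OF \<sigma> ab(1) diff[OF ab(2)]])
    moreover have "length (T b) = m" using bij_betwE[OF T] ab(2) by simp
    ultimately show "Y \<in> code_supports n m F'" unfolding code_supports_eq Y by blast
  next
    fix Y assume "Y \<in> code_supports n m F'"
    then obtain c' a' b' where Y: "Y = codeword n F' c' a' b'" and ab': "length a' = n" "length b' = m"
      unfolding code_supports_eq by blast
    have "b' \<in> T ` vecs m" using bij_betw_imp_surj_on[OF T] ab'(2) by simp
    then obtain b where b: "length b = m" "b' = T b" by auto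
    obtain c a where "length a = n" "\<sigma> ` codeword n F c a b = codeword n F' c' a' (T b)"
      by (rule codeword_eq_image_of_affine_diff[OF \<sigma> ab'(1) diff[OF b(1)]])
    thus "Y \<in> (\<lambda>X. \<sigma> ` X) ` code_supports n m F"
      unfolding code_supports_eq Y b(2) using b(1) by blast
  qed
qed

lemma EA_equivalent_imp_incidence_iso:
  assumes F': "is_nm_function n m F'" and EA: "EA_equivalent n m F F'"
  shows "incidence_iso (vecs n) (add_design_blocks n m F) (vecs n) (add_design_blocks n m F')"
proof -
  obtain A1 A2 A3 where A1: "linear_map m m A1" "bij_betw A1 (vecs m) (vecs m)"
    and A2: "affine_map n n A2" "bij_betw A2 (vecs n) (vecs n)" and A3: "affine_map n m A3"
    and F: "\<forall>x\<in>vecs n. F x = vadd (A1 (F' (A2 x))) (A3 x)"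
    using EA unfolding EA_equivalent_def by blast
  obtain T where "linear_map m m T" and T: "bij_betw T (vecs m) (vecs m)"
    "\<And>b y. length b = m \<Longrightarrow> length y = m \<Longrightarrow> dotp b (A1 y) = dotp (T b) y"
    using linear_map_transpose[OF A1] by blast
  have "component_affine_equiv n m F (\<lambda>x. F' (A2 x)) b (T b)" if b: "length b = m" for b
  proof -
    have split: "dotp b (F x) = (dotp (T b) (F' (A2 x)) \<noteq> dotp b (A3 x))" if x: "length x = n" for x
    proof -
      have "length (F' (A2 x)) = m"
        using F' affine_map_length[OF A2(1) x] unfolding is_nm_function_def by simp
      moreover have "length (A1 (F' (A2 x))) = m"
        using A1(1) calculation unfolding linear_map_def by simp
      ultimately show ?thesis using F b x affine_map_length[OF A3 x]
        by (simp add: dotp_vadd_right T(2))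
    qed
    have "affine_fn n (\<lambda>x. dotp b (F x) \<noteq> dotp (T b) (F' (A2 x)))"
    proof (rule affine_fn_cong[OF affine_fn_comp[OF affine_fn_dotp[OF b] A3]])
      fix x :: "bool list" assume "length x = n"
      with split show "dotp b (A3 x) = (dotp b (F x) \<noteq> dotp (T b) (F' (A2 x)))" by blast
    qed
    thus ?thesis unfolding component_affine_equiv_def using bij_betwE[OF T(1)] b by simp
  qed
  thus ?thesis
    by (intro incidence_iso_of_image_code_supports[OF A2(2)]
        image_code_supports_of_component_affine_equiv[OF A2 T(1)])
qed

section \<open>Design isomorphisms preserve hyperplanes\<close>

lemma image_sym_diff:
  assumes f: "inj_on f C" and "A \<subseteq> C" "B \<subseteq> C"
  shows "f ` sym_diff A B = sym_diff (f ` A) (f ` B)"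
proof -
  have "f ` (A - B) = f ` A - f ` B" "f ` (B - A) = f ` B - f ` A"
    by (rule inj_on_image_set_diff[OF f]; use assms in blast)+
  thus ?thesis by (simp add: image_Un)
qed

lemma codeword_sym_diff:
  assumes F: "is_nm_function n m F"
    and l: "length a1 = n" "length a2 = n" "length b1 = m" "length b2 = m"
  shows "sym_diff (codeword n F c1 a1 b1) (codeword n F c2 a2 b2)
       = codeword n F (c1 \<noteq> c2) (vadd a1 a2) (vadd b1 b2)"
proof (rule set_eqI)
  fix x
  show "x \<in> sym_diff (codeword n F c1 a1 b1) (codeword n F c2 a2 b2)
      \<longleftrightarrow> x \<in> codeword n F (c1 \<noteq> c2) (vadd a1 a2) (vadd b1 b2)"
  proof (cases "length x = n")
    case True
    hence "length (F x) = m" using F unfolding is_nm_function_def by simp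
    hence "dotp (vadd a1 a2) x = (dotp a1 x \<noteq> dotp a2 x)"
      "dotp (vadd b1 b2) (F x) = (dotp b1 (F x) \<noteq> dotp b2 (F x))"
      using True l by (simp_all add: dotp_vadd_left)
    with True show ?thesis unfolding codeword_def Un_iff Diff_iff mem_Collect_eq mem_vecs by argo
  qed (simp add: codeword_def)
qed

lemma sym_diff_code_supports_hyperplane:
  assumes bent: "vbent n m F" and n: "2 \<le> n"
    and B: "B1 \<in> code_supports n m F" "B2 \<in> code_supports n m F"
    and card: "card (sym_diff B1 B2) = 2 ^ (n - 1)"
  shows "sym_diff B1 B2 \<in> hyperplanes n"
proof -
  obtain c1 a1 b1 c2 a2 b2
    where B1: "B1 = codeword n F c1 a1 b1" and B2: "B2 = codeword n F c2 a2 b2"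
    and l: "length a1 = n" "length a2 = n" "length b1 = m" "length b2 = m"
    using B unfolding code_supports_eq by blast
  let ?a = "vadd a1 a2" and ?b = "vadd b1 b2"
  have F: "is_nm_function n m F" using bent unfolding vbent_def by simp
  have D: "sym_diff B1 B2 = codeword n F (c1 \<noteq> c2) ?a ?b"
    unfolding B1 B2 using codeword_sym_diff[OF F l] .
  have h: "0 < (2::nat) ^ (n div 2 - 1)" "(2::nat) ^ (n div 2 - 1) < 2 ^ (n - 1)"
    using power_half_lt_power_pred[OF n] by simp_all
  have "?b = vzero m"
  proof (rule ccontr)
    assume "?b \<noteq> vzero m"
    hence "card (sym_diff B1 B2) = 2 ^ (n - 1) - 2 ^ (n div 2 - 1)
         \<or> card (sym_diff B1 B2) = 2 ^ (n - 1) + 2 ^ (n div 2 - 1)"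
      unfolding D using bent_card_codeword[OF bent n] l by simp
    with card h show False by linarith
  qed
  hence D': "sym_diff B1 B2 = {x \<in> vecs n. dotp ?a x = (c1 = c2)}"
    unfolding D by (simp add: codeword_vzero_right)
  have "?a \<noteq> vzero n"
  proof
    assume "?a = vzero n"
    hence "sym_diff B1 B2 = (if c1 = c2 then {} else vecs n)" unfolding D' by auto
    hence "card (sym_diff B1 B2) = 0 \<or> card (sym_diff B1 B2) = 2 ^ n" by (simp add: card_vecs)
    moreover have "(2::nat) ^ (n - 1) < 2 ^ n" using n by (intro power_strict_increasing) auto
    ultimately show False using card by auto
  qed
  moreover have "length ?a = n" using l by simp
  ultimately show ?thesis unfolding D' hyperplanes_def by blast
qed

lemma hyperplane_eq_sym_diff_design_blocks:
  assumes bent: "vbent n m F" and n: "2 \<le> n" and m: "1 \<le> m" and H: "H \<in> hyperplanes n"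
  obtains B1 B2 where "B1 \<in> add_design_blocks n m F" "B2 \<in> add_design_blocks n m F"
    "H = sym_diff B1 B2 \<or> H = vecs n - sym_diff B1 B2"
proof -
  obtain d e where d: "length d = n" "d \<noteq> vzero n" and H: "H = {x \<in> vecs n. dotp d x = e}"
    using H unfolding hyperplanes_def by blast
  let ?b = "unit_vec m 0"
  have b: "length ?b = m" "?b \<noteq> vzero m" using m unit_vec_neq_vzero[of 0 m] by auto
  obtain c1 where B1: "codeword n F c1 (vzero n) ?b \<in> add_design_blocks n m F"
    using design_block_exists[OF bent n length_vzero b] by blast
  obtain c2 where B2: "codeword n F c2 d ?b \<in> add_design_blocks n m F"
    using design_block_exists[OF bent n d(1) b] by blast
  have F: "is_nm_function n m F" using bent unfolding vbent_def by simp
  have D: "sym_diff (codeword n F c1 (vzero n) ?b) (codeword n F c2 d ?b)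
      = {x \<in> vecs n. dotp d x = (c1 = c2)}"
    using codeword_sym_diff[OF F length_vzero d(1) b(1) b(1), of c1 c2] d(1) b(1)
    by (simp add: codeword_vzero_right)
  have "H = {x \<in> vecs n. dotp d x = (c1 = c2)} \<or> H = vecs n - {x \<in> vecs n. dotp d x = (c1 = c2)}"
    unfolding H by (cases "e = (c1 = c2)") auto
  thus ?thesis unfolding D[symmetric] by (rule that[OF B1 B2])
qed

lemma design_iso_image_hyperplane:
  assumes bent: "vbent n m F" "vbent n m F'" and n: "2 \<le> n" and m: "1 \<le> m"
    and bij: "bij_betw \<sigma> (vecs n) (vecs n)"
    and blocks: "\<And>B. B \<in> add_design_blocks n m F \<Longrightarrow> \<sigma> ` B \<in> add_design_blocks n m F'"
    and H: "H \<in> hyperplanes n"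
  shows "\<sigma> ` H \<in> hyperplanes n"
proof -
  have inj: "inj_on \<sigma> (vecs n)" using bij by (rule bij_betw_imp_inj_on)
  have in_code: "B \<in> code_supports n m G" if "B \<in> add_design_blocks n m G" for B G
    using that unfolding add_design_blocks_def by simp
  have sub: "B \<subseteq> vecs n" if "B \<in> add_design_blocks n m F" for B
    using in_code[OF that] unfolding code_supports_def by auto
  obtain B1 B2 where B: "B1 \<in> add_design_blocks n m F" "B2 \<in> add_design_blocks n m F"
    and H_eq: "H = sym_diff B1 B2 \<or> H = vecs n - sym_diff B1 B2"
    using hyperplane_eq_sym_diff_design_blocks[OF bent(1) n m H] by blast
  let ?D = "sym_diff B1 B2"
  have D_sub: "?D \<subseteq> vecs n" using sub[OF B(1)] sub[OF B(2)] by blast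
  from H_eq have "?D \<in> hyperplanes n"
  proof
    assume "H = vecs n - ?D"
    hence "?D = vecs n - H" using D_sub by blast
    thus ?thesis using vecs_diff_hyperplane[OF H] by simp
  qed (use H in simp)
  hence "card (\<sigma> ` ?D) = 2 ^ (n - 1)"
    using card_hyperplane card_image[OF inj_on_subset[OF inj D_sub]] by simp
  moreover have "\<sigma> ` ?D = sym_diff (\<sigma> ` B1) (\<sigma> ` B2)"
    using image_sym_diff[OF inj sub[OF B(1)] sub[OF B(2)]] .
  ultimately have D': "\<sigma> ` ?D \<in> hyperplanes n"
    using sym_diff_code_supports_hyperplane[OF bent(2) n
        in_code[OF blocks[OF B(1)]] in_code[OF blocks[OF B(2)]]]
    by simp
  have "\<sigma> ` (vecs n - ?D) = vecs n - \<sigma> ` ?D"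
    using inj_on_image_set_diff[OF inj _ D_sub] bij_betw_imp_surj_on[OF bij] by simp
  with H_eq D' vecs_diff_hyperplane[OF D'] show ?thesis by (elim disjE) simp_all
qed

section \<open>Hyperplane-preserving permutations are affine\<close>

lemma finite_hyperplanes: "finite (hyperplanes n)"
proof (rule finite_subset)
  show "hyperplanes n \<subseteq> Pow (vecs n)" using hyperplane_subset_vecs by blast
qed (simp add: finite_vecs)

lemma image_hyperplanes_eq:
  assumes bij: "bij_betw \<sigma> (vecs n) (vecs n)"
    and hyp: "\<And>H. H \<in> hyperplanes n \<Longrightarrow> \<sigma> ` H \<in> hyperplanes n"
  shows "(\<lambda>H. \<sigma> ` H) ` hyperplanes n = hyperplanes n"
proof (rule endo_inj_surj[OF finite_hyperplanes])
  show "(\<lambda>H. \<sigma> ` H) ` hyperplanes n \<subseteq> hyperplanes n" by (rule image_subsetI) (rule hyp)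
  have inj: "inj_on \<sigma> (vecs n)" using bij by (rule bij_betw_imp_inj_on)
  show "inj_on (\<lambda>H. \<sigma> ` H) (hyperplanes n)"
  proof (rule inj_onI)
    fix X Y assume "X \<in> hyperplanes n" "Y \<in> hyperplanes n" "\<sigma> ` X = \<sigma> ` Y"
    thus "X = Y"
      using inj_on_image_eq_iff[OF inj hyperplane_subset_vecs hyperplane_subset_vecs] by blast
  qed
qed

lemma affine_map_of_hyperplane_preserving:
  assumes bij: "bij_betw \<sigma> (vecs n) (vecs n)"
    and hyp: "\<And>H. H \<in> hyperplanes n \<Longrightarrow> \<sigma> ` H \<in> hyperplanes n"
  shows "affine_map n n \<sigma>"
proof (rule affine_mapI_components)
  show "length (\<sigma> x) = n" if "length x = n" for x
    using bij_betwE[OF bij] that by simp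
  fix d' :: "bool list" assume d': "length d' = n"
  show "affine_fn n (\<lambda>x. dotp d' (\<sigma> x))"
  proof (cases "d' = vzero n")
    case True
    thus ?thesis using affine_fn_const[of n False] by simp
  next
    case False
    have "{y \<in> vecs n. dotp d' y = False} \<in> hyperplanes n"
      unfolding hyperplanes_def using d' False by blast
    hence "{y \<in> vecs n. dotp d' y = False} \<in> (\<lambda>H. \<sigma> ` H) ` hyperplanes n"
      using image_hyperplanes_eq[OF bij hyp] by simp
    then obtain H where H: "H \<in> hyperplanes n" "\<sigma> ` H = {y \<in> vecs n. dotp d' y = False}"
      by blast
    then obtain d e where d: "length d = n" and H_eq: "H = {x \<in> vecs n. dotp d x = e}"
      unfolding hyperplanes_def by blast
    have "dotp d' (\<sigma> x) = (dotp d x \<noteq> e)" if x: "length x = n" for x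
    proof -
      have "\<sigma> x \<in> {y \<in> vecs n. dotp d' y = False} \<longleftrightarrow> x \<in> H"
        unfolding H(2)[symmetric]
        using inj_on_image_mem_iff[OF bij_betw_imp_inj_on[OF bij] _ hyperplane_subset_vecs[OF H(1)]]
          x
        by simp
      moreover have "\<sigma> x \<in> vecs n" using bij_betwE[OF bij] x by simp
      ultimately show ?thesis unfolding H_eq using x by auto
    qed
    thus ?thesis unfolding affine_fn_def using d by blast
  qed
qed

section \<open>Isomorphic designs come from EA-equivalent functions\<close>

lemma component_affine_equiv_vadd:
  assumes F: "is_nm_function n m F" and G: "is_nm_function n m G"
    and b: "length b1 = m" "length b2 = m"
    and eq: "component_affine_equiv n m F G b1 \<beta>1" "component_affine_equiv n m F G b2 \<beta>2"
  shows "component_affine_equiv n m F G (vadd b1 b2) (vadd \<beta>1 \<beta>2)"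
proof -
  have \<beta>: "length \<beta>1 = m" "length \<beta>2 = m" using eq unfolding component_affine_equiv_def by simp_all
  have "affine_fn n (\<lambda>x. (dotp b1 (F x) \<noteq> dotp \<beta>1 (G x)) \<noteq> (dotp b2 (F x) \<noteq> dotp \<beta>2 (G x)))"
    by (rule affine_fn_xor) (use eq in \<open>simp_all add: component_affine_equiv_def\<close>)
  moreover have "((dotp b1 (F x) \<noteq> dotp \<beta>1 (G x)) \<noteq> (dotp b2 (F x) \<noteq> dotp \<beta>2 (G x)))
      = (dotp (vadd b1 b2) (F x) \<noteq> dotp (vadd \<beta>1 \<beta>2) (G x))" if x: "length x = n" for x
  proof -
    have "length (F x) = m" "length (G x) = m"
      using F G x unfolding is_nm_function_def by simp_all
    thus ?thesis using b \<beta> by (simp add: dotp_vadd_left) argo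
  qed
  ultimately show ?thesis unfolding component_affine_equiv_def using \<beta>
    by (simp add: affine_fn_cong)
qed

lemma component_affine_equiv_unique:
  assumes G: "is_nm_function n m G" and G_nonaff: "no_affine_component n m G"
    and eq: "component_affine_equiv n m F G b \<beta>1" "component_affine_equiv n m F G b \<beta>2"
  shows "\<beta>1 = \<beta>2"
proof -
  have \<beta>: "length \<beta>1 = m" "length \<beta>2 = m" using eq unfolding component_affine_equiv_def by simp_all
  have "affine_fn n (\<lambda>x. (dotp b (F x) \<noteq> dotp \<beta>1 (G x)) \<noteq> (dotp b (F x) \<noteq> dotp \<beta>2 (G x)))"
    by (rule affine_fn_xor) (use eq in \<open>simp_all add: component_affine_equiv_def\<close>)
  hence "affine_fn n (\<lambda>x. dotp (vadd \<beta>1 \<beta>2) (G x))"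
  proof (rule affine_fn_cong)
    fix x :: "bool list" assume "length x = n"
    hence "length (G x) = m" using G unfolding is_nm_function_def by simp
    thus "((dotp b (F x) \<noteq> dotp \<beta>1 (G x)) \<noteq> (dotp b (F x) \<noteq> dotp \<beta>2 (G x)))
        = dotp (vadd \<beta>1 \<beta>2) (G x)"
      using \<beta> by (simp add: dotp_vadd_left) argo
  qed
  hence "vadd \<beta>1 \<beta>2 = vzero m" using no_affine_componentD[OF G_nonaff] \<beta> by simp
  thus ?thesis using vadd_eq_vzero_imp_eq \<beta> by simp
qed

lemma linear_bij_of_component_affine_equiv:
  assumes F: "is_nm_function n m F" and G: "is_nm_function n m G"
    and F_nonaff: "no_affine_component n m F" and G_nonaff: "no_affine_component n m G"
    and ex: "\<And>b. length b = m \<Longrightarrow> \<exists>\<beta>. component_affine_equiv n m F G b \<beta>"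
  obtains \<phi> where "linear_map m m \<phi>" "bij_betw \<phi> (vecs m) (vecs m)"
    "\<And>b. length b = m \<Longrightarrow> component_affine_equiv n m F G b (\<phi> b)"
proof -
  obtain \<phi> where \<phi>: "\<forall>b\<in>vecs m. component_affine_equiv n m F G b (\<phi> b)"
    using bchoice[of "vecs m" "component_affine_equiv n m F G"] ex by auto
  have len: "length (\<phi> b) = m" if "length b = m" for b
    using \<phi> that unfolding component_affine_equiv_def by simp
  have add: "\<phi> (vadd b1 b2) = vadd (\<phi> b1) (\<phi> b2)" if b: "length b1 = m" "length b2 = m" for b1 b2
    using component_affine_equiv_unique[OF G G_nonaff, of F "vadd b1 b2"] \<phi> b
      component_affine_equiv_vadd[OF F G b] by simp
  have lin: "linear_map m m \<phi>" unfolding linear_map_def using len add by simp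
  have inj: "inj_on \<phi> (vecs m)"
  proof (rule inj_onI)
    fix b1 b2 assume b: "b1 \<in> vecs m" "b2 \<in> vecs m" "\<phi> b1 = \<phi> b2"
    hence "\<phi> (vadd b1 b2) = vzero m" using add len by simp
    moreover have "vadd b1 b2 \<in> vecs m" using b by simp
    ultimately have "component_affine_equiv n m F G (vadd b1 b2) (vzero m)" using \<phi> by metis
    hence "affine_fn n (\<lambda>x. dotp (vadd b1 b2) (F x))"
      unfolding component_affine_equiv_def by simp
    hence "vadd b1 b2 = vzero m" using no_affine_componentD[OF F_nonaff] b by simp
    thus "b1 = b2" using vadd_eq_vzero_imp_eq b by simp
  qed
  have "\<phi> ` vecs m \<subseteq> vecs m" using len by auto
  hence "bij_betw \<phi> (vecs m) (vecs m)"
    unfolding bij_betw_def using inj endo_inj_surj[OF finite_vecs _ inj] by blast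
  with lin show ?thesis using \<phi> that by simp
qed

lemma no_affine_component_comp_affine_perm:
  assumes nonaff: "no_affine_component n m F"
    and \<sigma>: "affine_map n n \<sigma>" "bij_betw \<sigma> (vecs n) (vecs n)"
  shows "no_affine_component n m (\<lambda>x. F (\<sigma> x))"
  unfolding no_affine_component_def
proof (intro allI impI notI)
  fix \<beta> :: "bool list" assume \<beta>: "length \<beta> = m" "\<beta> \<noteq> vzero m"
    and "affine_fn n (\<lambda>x. dotp \<beta> (F (\<sigma> x)))"
  hence "affine_fn n (\<lambda>y. dotp \<beta> (F (\<sigma> (inv_into (vecs n) \<sigma> y))))"
    using affine_fn_comp[OF _ affine_map_inv[OF \<sigma>]] by blast
  hence "affine_fn n (\<lambda>y. dotp \<beta> (F y))"
    by (rule affine_fn_cong) (use bij_betw_imp_surj_on[OF \<sigma>(2)] in \<open>simp add: f_inv_into_f\<close>)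
  thus False using nonaff \<beta> unfolding no_affine_component_def by blast
qed

lemma affine_map_vadd_of_component_affine_equiv:
  assumes F: "is_nm_function n m F" and G: "is_nm_function n m G" and A1: "linear_map m m A1"
    and A1_dotp: "\<And>b y. length b = m \<Longrightarrow> length y = m \<Longrightarrow> dotp b (A1 y) = dotp (\<phi> b) y"
    and \<phi>: "\<And>b. length b = m \<Longrightarrow> component_affine_equiv n m F G b (\<phi> b)"
  shows "affine_map n m (\<lambda>x. vadd (F x) (A1 (G x)))"
proof (rule affine_mapI_components)
  have len: "length (F x) = m" "length (G x) = m" "length (A1 (G x)) = m" if "length x = n" for x
    using F G A1 that unfolding is_nm_function_def linear_map_def by simp_all
  show "length (vadd (F x) (A1 (G x))) = m" if "length x = n" for x
    using len[OF that] by simp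
  fix b :: "bool list" assume b: "length b = m"
  have "dotp b (vadd (F x) (A1 (G x))) = (dotp b (F x) \<noteq> dotp (\<phi> b) (G x))" if x: "length x = n" for x
    using b len[OF x] by (simp add: dotp_vadd_right A1_dotp)
  moreover have "affine_fn n (\<lambda>x. dotp b (F x) \<noteq> dotp (\<phi> b) (G x))"
    using \<phi>[OF b] unfolding component_affine_equiv_def by simp
  ultimately show "affine_fn n (\<lambda>x. dotp b (vadd (F x) (A1 (G x))))" by (simp add: affine_fn_cong)
qed

lemma EA_equivalent_of_component_affine_equiv:
  assumes \<sigma>: "affine_map n n \<sigma>" "bij_betw \<sigma> (vecs n) (vecs n)"
    and F: "is_nm_function n m F" and F': "is_nm_function n m F'"
    and F_nonaff: "no_affine_component n m F" and F'_nonaff: "no_affine_component n m F'"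
    and ex: "\<And>b. length b = m \<Longrightarrow> \<exists>\<beta>. component_affine_equiv n m F (\<lambda>x. F' (\<sigma> x)) b \<beta>"
  shows "EA_equivalent n m F F'"
proof -
  let ?G = "\<lambda>x. F' (\<sigma> x)"
  have G: "is_nm_function n m ?G"
    using F' affine_map_length[OF \<sigma>(1)] unfolding is_nm_function_def by simp
  obtain \<phi> where \<phi>_lin: "linear_map m m \<phi>" and \<phi>_bij: "bij_betw \<phi> (vecs m) (vecs m)"
    and \<phi>: "\<And>b. length b = m \<Longrightarrow> component_affine_equiv n m F ?G b (\<phi> b)"
    using linear_bij_of_component_affine_equiv[OF F G F_nonaff
        no_affine_component_comp_affine_perm[OF F'_nonaff \<sigma>] ex] by blast
  obtain A1 where A1: "linear_map m m A1" "bij_betw A1 (vecs m) (vecs m)"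
    and A1_\<phi>: "\<And>y b. length y = m \<Longrightarrow> length b = m \<Longrightarrow> dotp y (\<phi> b) = dotp (A1 y) b"
    using linear_map_transpose[OF \<phi>_lin \<phi>_bij] by blast
  have A1_dotp: "dotp b (A1 y) = dotp (\<phi> b) y" if "length b = m" "length y = m" for b y
  proof -
    have "length (A1 y) = m" "length (\<phi> b) = m"
      using A1(1) \<phi>[OF that(1)] that unfolding linear_map_def component_affine_equiv_def by simp_all
    thus ?thesis using A1_\<phi>[OF that(2,1)] that by (simp add: dotp_commute)
  qed
  define A3 where "A3 x = vadd (F x) (A1 (?G x))" for x
  have "affine_map n m A3"
    unfolding A3_def using affine_map_vadd_of_component_affine_equiv[OF F G A1(1) A1_dotp \<phi>] .
  moreover have "\<forall>x\<in>vecs n. F x = vadd (A1 (?G x)) (A3 x)"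
  proof
    fix x assume "x \<in> vecs n"
    hence "length (F x) = m" "length (A1 (?G x)) = m"
      using F G A1(1) unfolding is_nm_function_def linear_map_def by simp_all
    thus "F x = vadd (A1 (?G x)) (A3 x)" unfolding A3_def by (intro nth_equalityI) auto
  qed
  ultimately show ?thesis unfolding EA_equivalent_def using A1 \<sigma> by blast
qed
lemma design_block_image_component_affine_equiv:
  assumes bent: "vbent n m F" and n: "2 \<le> n"
    and \<sigma>: "affine_map n n \<sigma>" "bij_betw \<sigma> (vecs n) (vecs n)"
    and blocks: "\<And>B. B \<in> add_design_blocks n m F \<Longrightarrow> \<sigma> ` B \<in> add_design_blocks n m F'"
    and b: "length b = m"
  shows "\<exists>\<beta>. component_affine_equiv n m F (\<lambda>x. F' (\<sigma> x)) b \<beta>"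
proof (cases "b = vzero m")
  case True
  have "affine_fn n (\<lambda>x. dotp b (F x) \<noteq> dotp (vzero m) (F' (\<sigma> x)))"
    using True affine_fn_const[of n False] by simp
  thus ?thesis unfolding component_affine_equiv_def by (intro exI[of _ "vzero m"]) simp
next
  case False
  obtain c where B: "codeword n F c (vzero n) b \<in> add_design_blocks n m F"
    using design_block_exists[OF bent n length_vzero b False] by blast
  then obtain c' a' b' where B': "\<sigma> ` codeword n F c (vzero n) b = codeword n F' c' a' b'"
    and ab': "length a' = n" "length b' = m"
    using blocks[OF B] unfolding add_design_blocks_def code_supports_eq by blast
  have "(dotp b (F x) \<noteq> dotp b' (F' (\<sigma> x))) = (c \<noteq> (c' \<noteq> dotp a' (\<sigma> x)))" if x: "length x = n" for x
  proof -
    have "\<sigma> x \<in> codeword n F' c' a' b' \<longleftrightarrow> x \<in> codeword n F c (vzero n) b"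
      unfolding B'[symmetric]
      using inj_on_image_mem_iff[OF bij_betw_imp_inj_on[OF \<sigma>(2)] _ codeword_subset_vecs] x by simp
    moreover have "\<sigma> x \<in> vecs n" using bij_betwE[OF \<sigma>(2)] x by simp
    ultimately show ?thesis unfolding codeword_def using x by simp argo
  qed
  moreover have "affine_fn n (\<lambda>x. c \<noteq> (c' \<noteq> dotp a' (\<sigma> x)))"
    by (intro affine_fn_xor affine_fn_const affine_fn_comp[OF affine_fn_dotp \<sigma>(1)] ab')
  ultimately show ?thesis unfolding component_affine_equiv_def using ab'(2)
    by (blast intro: affine_fn_cong)
qed

lemma incidence_iso_imp_EA_equivalent:
  assumes bent: "vbent n m F" "vbent n m F'" and n: "2 \<le> n" and m: "1 \<le> m"
    and iso: "incidence_iso (vecs n) (add_design_blocks n m F) (vecs n) (add_design_blocks n m F')"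
  shows "EA_equivalent n m F F'"
proof -
  obtain \<sigma> where bij: "bij_betw \<sigma> (vecs n) (vecs n)"
    and bij_blocks: "bij_betw (\<lambda>X. \<sigma> ` X) (add_design_blocks n m F) (add_design_blocks n m F')"
    using iso unfolding incidence_iso_def by blast
  have blocks: "\<sigma> ` B \<in> add_design_blocks n m F'" if "B \<in> add_design_blocks n m F" for B
    using bij_betwE[OF bij_blocks] that by blast
  have \<sigma>: "affine_map n n \<sigma>"
    using affine_map_of_hyperplane_preserving[OF bij
        design_iso_image_hyperplane[OF bent n m bij blocks]] .
  show ?thesis
  proof (rule EA_equivalent_of_component_affine_equiv[OF \<sigma> bij])
    show "is_nm_function n m F" "is_nm_function n m F'" using bent unfolding vbent_def by simp_all
    show "no_affine_component n m F" "no_affine_component n m F'"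
      using vbent_no_affine_component[OF _ n] bent by simp_all
    show "\<exists>\<beta>. component_affine_equiv n m F (\<lambda>x. F' (\<sigma> x)) b \<beta>" if "length b = m" for b
      using design_block_image_component_affine_equiv[OF bent(1) n \<sigma> bij blocks that] .
  qed
qed

theorem theorem1:
  fixes n m :: nat and F F' :: "bool list \<Rightarrow> bool list"
  assumes "even n" and "1 \<le> m" and "m \<le> n div 2"
    and "vbent n m F" and "vbent n m F'"
  shows "EA_equivalent n m F F' \<longleftrightarrow>
    incidence_iso (vecs n) (add_design_blocks n m F) (vecs n) (add_design_blocks n m F')"
proof
  have "is_nm_function n m F'" using \<open>vbent n m F'\<close> unfolding vbent_def by simp
  thus "EA_equivalent n m F F' \<Longrightarrow>
      incidence_iso (vecs n) (add_design_blocks n m F) (vecs n) (add_design_blocks n m F')"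
    by (rule EA_equivalent_imp_incidence_iso)
  have "2 \<le> n" using \<open>1 \<le> m\<close> \<open>m \<le> n div 2\<close> by linarith
  thus "incidence_iso (vecs n) (add_design_blocks n m F) (vecs n) (add_design_blocks n m F') \<Longrightarrow>
      EA_equivalent n m F F'"
    using incidence_iso_imp_EA_equivalent \<open>vbent n m F\<close> \<open>vbent n m F'\<close> \<open>1 \<le> m\<close> by blast
qed

end
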